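(* Let $G=(V,E)$ be a wireless sensor network whose nodes are points in the Euclidean plane, with a sink $v_s\in V$, operating under an interference model $\mathcal M$. Let $\mathcal Q$ be a finite set of periodic data collection queries, where the $i$-th query has source set $\mathcal S_i\subseteq V$, per-link transmission time $\chi_i>0$ per data unit, period $\mathbf p_i>0$, initial release time $\mathbf a_i$ and relative deadline $\mathbf d_i$. If $\mathcal Q$ is schedulable, then $$\ell_{G,\mathcal Q}(g_{v,h})\le c_1(\mathcal M)\quad\text{for every interference-aware region } g_{v,h}\ (v,h\in\mathbb Z),$$ and $$\sum_{i}\frac{|\mathcal S_i|\cdot\chi_i}{\mathbf p_i}\le 1 .$$
   Context: Network model: two nodes can communicate if they are within transmission range of each other; $E$ is the set of communication links. An interference model $\mathcal M$ specifies which sets of links can transmit simultaneously (interference-free). Examples: the protocol interference model, the RTS/CTS model and the physical (SINR) interference model. The interference-aware radius $\lambda(\mathcal M)$ is the maximum possible distance between two senders such that the corresponding two links interfere under $\mathcal M$; hence nodes pairwise more than $\lambda(\mathcal M)$ apart can transmit concurrently. Partition the plane by the vertical lines $x=i\lambda(\mathcal M)$ and horizontal lines $y=j\lambda(\mathcal M)$, $i,j\in\mathbb Z$; the square between $x=v\lambda(\mathcal M)$, $x=(v+1)\lambda(\mathcal M)$, $y=h\lambda(\mathcal M)$, $y=(h+1)\lambda(\mathcal M)$ is the interference-aware region $g_{v,h}$. The constant $c_1(\mathcal M)\ge 1$ is the maximum number of nodes that can transmit concurrently in any interference-aware region under $\mathcal M$. Queries: each source $v\in\mathcal S_i$ generates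 one data unit for the $i$-th query per period; the $t$-th instance of query $i$ is released at $\mathbf a_i+(t-1)\mathbf p_i$ and its data (the raw data unit from every node of $\mathcal S_i$, collected without aggregation) must be received by the sink by $\mathbf a_i+(t-1)\mathbf p_i+\mathbf d_i$. Transmitting one data unit of query $i$ over any link takes time $\chi_i$. The set $\mathcal Q$ is schedulable if there exist routing and an interference-free schedule of node transmissions (when each node transmits and which packets) under $\mathcal M$ such that every instance of every query meets its deadline. Initial load: for $u\in V$, $\ell_{G,\mathcal Q}(u)=\sum_{j:\,u\in\mathcal S_j}\chi_j/\mathbf p_j$; for a region $g$, $\ell_{G,\mathcal Q}(g)=\sum_{u\in V(g)}\ell_{G,\mathcal Q}(u)$, where $V(g)$ is the set of nodes of $V$ lying in $g$. *)

theory Defs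
  imports "HOL-Analysis.Analysis"
begin

text \<open>Nodes are points of the Euclidean plane; a link is an ordered pair (sender, receiver).\<close>
type_synonym point = "real \<times> real"
type_synonym link = "point \<times> point"

definition links :: "point set \<Rightarrow> real \<Rightarrow> link set" where
  "links V R = {(u, w). u \<in> V \<and> w \<in> V \<and> u \<noteq> w \<and> dist u w \<le> R}"

text \<open>An interference model M is the family of link sets that can transmit
  simultaneously (interference-free).  Two links e1, e2 interfere iff {e1,e2} is not in M.\<close>
definition interference_radius :: "link set \<Rightarrow> link set set \<Rightarrow> real" where
  "interference_radius E M =
     Max (insert 0 {dist (fst e1) (fst e2) | e1 e2. e1 \<in> E \<and> e2 \<in> E \<and> {e1, e2} \<notin> M})"

definition region :: "real \<Rightarrow> int \<Rightarrow> int \<Rightarrow> point set" where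
  "region lam v h = {(x, y). real_of_int v * lam \<le> x \<and> x < real_of_int (v + 1) * lam \<and>
                              real_of_int h * lam \<le> y \<and> y < real_of_int (h + 1) * lam}"

definition c1 :: "link set \<Rightarrow> link set set \<Rightarrow> nat" where
  "c1 E M = Sup {card {fst e | e. e \<in> A \<and> fst e \<in> region (interference_radius E M) v h}
                 | A v h. A \<in> M \<and> A \<subseteq> E}"

text \<open>Queries are indexed by i < n with source sets S i, transmission time chi i,
  period p i, release offset a i and relative deadline d i.\<close>
definition node_load :: "nat \<Rightarrow> (nat \<Rightarrow> point set) \<Rightarrow> (nat \<Rightarrow> real) \<Rightarrow> (nat \<Rightarrow> real)
    \<Rightarrow> point \<Rightarrow> real" where
  "node_load n S chi p u = (\<Sum>j \<in> {j. j < n \<and> u \<in> S j}. chi j / p j)"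

definition region_load :: "point set \<Rightarrow> nat \<Rightarrow> (nat \<Rightarrow> point set) \<Rightarrow> (nat \<Rightarrow> real)
    \<Rightarrow> (nat \<Rightarrow> real) \<Rightarrow> point set \<Rightarrow> real" where
  "region_load V n S chi p g = (\<Sum>u \<in> V \<inter> g. node_load n S chi p u)"

fun walk_from :: "point \<Rightarrow> link list \<Rightarrow> point \<Rightarrow> bool" where
  "walk_from u [] w = (u = w)"
| "walk_from u (e # es) w = (fst e = u \<and> walk_from (snd e) es w)"

text \<open>A schedule sigma assigns to every data unit (query i, source u, instance t, where
  instance t = 0,1,2,... is released at a i + t * p i) its route together with the start
  time of each hop: a list of (link, start time).\<close>
type_synonym schedule = "nat \<Rightarrow> point \<Rightarrow> nat \<Rightarrow> (link \<times> real) list"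

definition active :: "nat \<Rightarrow> (nat \<Rightarrow> point set) \<Rightarrow> (nat \<Rightarrow> real) \<Rightarrow> schedule \<Rightarrow> real
    \<Rightarrow> (nat \<times> point \<times> nat \<times> nat) set" where
  "active n S chi \<sigma> \<tau> = {(i, u, t, j). i < n \<and> u \<in> S i \<and> j < length (\<sigma> i u t) \<and>
       snd (\<sigma> i u t ! j) \<le> \<tau> \<and> \<tau> < snd (\<sigma> i u t ! j) + chi i}"

definition active_link :: "schedule \<Rightarrow> nat \<times> point \<times> nat \<times> nat \<Rightarrow> link" where
  "active_link \<sigma> x = (case x of (i, u, t, j) \<Rightarrow> fst (\<sigma> i u t ! j))"

definition valid_schedule ::
  "point set \<Rightarrow> real \<Rightarrow> point \<Rightarrow> link set set \<Rightarrow> nat \<Rightarrow> (nat \<Rightarrow> point set)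
   \<Rightarrow> (nat \<Rightarrow> real) \<Rightarrow> (nat \<Rightarrow> real) \<Rightarrow> (nat \<Rightarrow> real) \<Rightarrow> (nat \<Rightarrow> real) \<Rightarrow> schedule \<Rightarrow> bool" where
  "valid_schedule V R vs M n S chi p a d \<sigma> \<longleftrightarrow>
     \<comment> \<open>routing and deadlines\<close>
     (\<forall>i < n. \<forall>u \<in> S i. \<forall>t. let hs = \<sigma> i u t; rel = a i + real t * p i in
        set (map fst hs) \<subseteq> links V R \<and>
        walk_from u (map fst hs) vs \<and>
        (\<forall>j < length hs. rel \<le> snd (hs ! j) \<and> snd (hs ! j) + chi i \<le> rel + d i) \<and>
        (\<forall>j. Suc j < length hs \<longrightarrow> snd (hs ! j) + chi i \<le> snd (hs ! Suc j))) \<and>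
     \<comment> \<open>interference-freedom at every time instant\<close>
     (\<forall>\<tau>. active_link \<sigma> ` active n S chi \<sigma> \<tau> \<in> M \<and>
        (\<forall>x \<in> active n S chi \<sigma> \<tau>. \<forall>y \<in> active n S chi \<sigma> \<tau>. x \<noteq> y \<longrightarrow>
           {fst (active_link \<sigma> x), snd (active_link \<sigma> x)} \<inter>
           {fst (active_link \<sigma> y), snd (active_link \<sigma> y)} = {}))"

definition schedulable ::
  "point set \<Rightarrow> real \<Rightarrow> point \<Rightarrow> link set set \<Rightarrow> nat \<Rightarrow> (nat \<Rightarrow> point set)
   \<Rightarrow> (nat \<Rightarrow> real) \<Rightarrow> (nat \<Rightarrow> real) \<Rightarrow> (nat \<Rightarrow> real) \<Rightarrow> (nat \<Rightarrow> real) \<Rightarrow> bool" where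
  "schedulable V R vs M n S chi p a d \<longleftrightarrow> (\<exists>\<sigma>. valid_schedule V R vs M n S chi p a d \<sigma>)"

end

theory Submission
  imports Defs
begin

text \<open>Every data unit spends time chi i on its first hop, which leaves its source, and on its
  last hop, which enters the sink, both inside its release window.  Hops active at the same
  instant are node-disjoint, so at any instant at most c1 first hops leave one region and at
  most one last hop enters the sink.  Over a horizon T the units released in a region need
  about T times the region's load of first-hop time, while packing these hops in time bounds
  it by c1 T; likewise all units need about T times the utilization of last-hop time, which
  is at most T.  Letting T grow gives both inequalities.\<close>

lemma has_integral_Ico_indicator:
  fixes a b L U :: real
  assumes "L \<le> a" "a \<le> b" "b \<le> U"
  shows "((\<lambda>x. if a \<le> x \<and> x < b then 1 else 0) has_integral (b - a)) {L..U}"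
proof -
  have "((\<lambda>x. 1::real) has_integral (b - a)) {a..b}"
    using has_integral_const_real[of "1::real" a b] assms by (simp add: content_real)
  then have "((\<lambda>x. if x \<in> {a..b} then 1::real else 0) has_integral (b - a)) {L..U}"
    using assms by (subst has_integral_restrict) auto
  moreover have "((\<lambda>x. if x \<in> {a..b} then 1::real else 0) has_integral (b - a)) {L..U} \<longleftrightarrow>
      ((\<lambda>x. if a \<le> x \<and> x < b then 1::real else 0) has_integral (b - a)) {L..U}"
    by (rule has_integral_spike_finite_eq[where S="{b}"]) auto
  ultimately show ?thesis by simp
qed

text \<open>Integrate the number of intervals containing each point.\<close>

lemma sum_interval_lengths_le_overlap:
  fixes s l :: "'k \<Rightarrow> real" and L U :: real and K :: nat
  assumes fin: "finite I" and "L \<le> U"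
    and within: "\<And>k. k \<in> I \<Longrightarrow> L \<le> s k \<and> 0 \<le> l k \<and> s k + l k \<le> U"
    and overlap: "\<And>\<tau>. card {k\<in>I. s k \<le> \<tau> \<and> \<tau> < s k + l k} \<le> K"
  shows "(\<Sum>k\<in>I. l k) \<le> real K * (U - L)"
proof -
  let ?count = "\<lambda>x. \<Sum>k\<in>I. if s k \<le> x \<and> x < s k + l k then 1 else 0 :: real"
  have "(?count has_integral (\<Sum>k\<in>I. l k)) {L..U}"
  proof (rule has_integral_sum[OF fin])
    fix k assume "k \<in> I"
    then show "((\<lambda>x. if s k \<le> x \<and> x < s k + l k then 1 else 0) has_integral l k) {L..U}"
      using has_integral_Ico_indicator[of L "s k" "s k + l k" U] within[of k] by simp
  qed
  moreover have "((\<lambda>x. real K) has_integral (real K * (U - L))) {L..U}"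
    using has_integral_const_real[of "real K" L U] \<open>L \<le> U\<close>
    by (simp add: content_real mult.commute)
  moreover have "?count x \<le> real K" for x
  proof -
    have "?count x = real (card {k\<in>I. s k \<le> x \<and> x < s k + l k})"
      using fin by (simp add: sum.If_cases Int_def)
    then show ?thesis using overlap[of x] by simp
  qed
  ultimately show ?thesis by (rule has_integral_le)
qed

lemma le_of_affine_bound:
  fixes \<alpha> \<beta> \<gamma> T\<^sub>0 :: real
  assumes "\<And>T. T \<ge> T\<^sub>0 \<Longrightarrow> \<alpha> * T \<le> \<beta> * T + \<gamma>"
  shows "\<alpha> \<le> \<beta>"
proof (rule ccontr)
  assume "\<not> \<alpha> \<le> \<beta>"
  define T where "T = max T\<^sub>0 ((\<gamma> + 1) / (\<alpha> - \<beta>))"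
  have "(\<gamma> + 1) / (\<alpha> - \<beta>) \<le> T" unfolding T_def by simp
  then have "\<gamma> + 1 \<le> T * (\<alpha> - \<beta>)"
    using \<open>\<not> \<alpha> \<le> \<beta>\<close> by (simp add: pos_divide_le_eq)
  moreover have "\<alpha> * T \<le> \<beta> * T + \<gamma>" using assms[of T] by (simp add: T_def)
  ultimately show False by (simp add: algebra_simps)
qed

text \<open>The data unit (i, u, t), released at a i + t p i, holds the slot
  [st i u t, st i u t + chi i) inside its window.  With c bounding all a i + d i and L all a i, the units released at
  least c before T have their slots inside [L, T].\<close>

lemma sum_slot_lengths_before_horizon_le:
  fixes S :: "nat \<Rightarrow> 'p set" and chi p a d :: "nat \<Rightarrow> real"
    and st :: "nat \<Rightarrow> 'p \<Rightarrow> nat \<Rightarrow> real" and K :: nat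
  assumes fin: "\<And>i. i < n \<Longrightarrow> finite (S i)"
    and chi: "\<And>i. i < n \<Longrightarrow> chi i \<ge> 0"
    and p: "\<And>i. i < n \<Longrightarrow> p i > 0"
    and window: "\<And>i u t. i < n \<Longrightarrow> u \<in> S i \<Longrightarrow>
                   a i + real t * p i \<le> st i u t \<and> st i u t + chi i \<le> a i + real t * p i + d i"
    and overlap: "\<And>\<tau> J. finite J \<Longrightarrow>
                   J \<subseteq> {(i, u, t). i < n \<and> u \<in> S i \<and> st i u t \<le> \<tau> \<and> \<tau> < st i u t + chi i} \<Longrightarrow>
                   card J \<le> K"
    and c: "\<And>i. i < n \<Longrightarrow> a i + d i \<le> c" and L: "\<And>i. i < n \<Longrightarrow> L \<le> a i"
    and T: "c \<le> T" "L \<le> T"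
  shows "(\<Sum>i<n. real (card (S i)) * real (nat \<lfloor>(T - c) / p i\<rfloor>) * chi i) \<le> real K * (T - L)"
proof -
  define N where "N i = nat \<lfloor>(T - c) / p i\<rfloor>" for i
  define I where "I = (SIGMA i:{..<n}. S i \<times> {..<N i})"
  have "finite I" unfolding I_def using fin by auto
  have before_horizon: "real t * p i \<le> T - c" if "i < n" "t < N i" for i t
  proof -
    have "real t \<le> (T - c) / p i"
      using that T p[of i] unfolding N_def by linarith
    then show ?thesis using p[of i] that by (simp add: pos_le_divide_eq)
  qed
  have "(\<Sum>i<n. real (card (S i)) * real (N i) * chi i) = (\<Sum>(i, u, t)\<in>I. chi i)"
    unfolding I_def using fin by (simp add: sum.Sigma[symmetric])
  also have "\<dots> \<le> real K * (T - L)"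
  proof (rule sum_interval_lengths_le_overlap[OF \<open>finite I\<close>, where s="\<lambda>(i, u, t). st i u t"])
    fix k assume "k \<in> I"
    then obtain i u t where k: "k = (i, u, t)" "i < n" "u \<in> S i" "t < N i"
      unfolding I_def by auto
    have "0 \<le> real t * p i" using p[OF k(2)] by simp
    then show "L \<le> (case k of (i, u, t) \<Rightarrow> st i u t) \<and> 0 \<le> (case k of (i, u, t) \<Rightarrow> chi i) \<and>
          (case k of (i, u, t) \<Rightarrow> st i u t) + (case k of (i, u, t) \<Rightarrow> chi i) \<le> T"
      using window[OF k(2,3), of t] c[OF k(2)] L[OF k(2)] chi[OF k(2)]
        before_horizon[OF k(2,4)] k(1)
      by auto
  next
    show "card {k\<in>I. (case k of (i, u, t) \<Rightarrow> st i u t) \<le> \<tau> \<and>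
              \<tau> < (case k of (i, u, t) \<Rightarrow> st i u t) + (case k of (i, u, t) \<Rightarrow> chi i)} \<le> K" for \<tau>
      by (rule overlap) (use \<open>finite I\<close> in \<open>auto simp: I_def\<close>)
  qed (use T in simp)
  finally show ?thesis unfolding N_def .
qed

text \<open>Each source of query i has at least (T - c) / p i - 1 such instances, so T times the
  utilization is at most K T plus a constant.\<close>

lemma utilization_le_slot_overlap:
  fixes S :: "nat \<Rightarrow> 'p set" and chi p a d :: "nat \<Rightarrow> real"
    and st :: "nat \<Rightarrow> 'p \<Rightarrow> nat \<Rightarrow> real" and K :: nat
  assumes fin: "\<And>i. i < n \<Longrightarrow> finite (S i)"
    and chi: "\<And>i. i < n \<Longrightarrow> chi i \<ge> 0"
    and p: "\<And>i. i < n \<Longrightarrow> p i > 0"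
    and window: "\<And>i u t. i < n \<Longrightarrow> u \<in> S i \<Longrightarrow>
                   a i + real t * p i \<le> st i u t \<and> st i u t + chi i \<le> a i + real t * p i + d i"
    and overlap: "\<And>\<tau> J. finite J \<Longrightarrow>
                   J \<subseteq> {(i, u, t). i < n \<and> u \<in> S i \<and> st i u t \<le> \<tau> \<and> \<tau> < st i u t + chi i} \<Longrightarrow>
                   card J \<le> K"
  shows "(\<Sum>i<n. real (card (S i)) * chi i / p i) \<le> real K"
proof -
  define m where "m i = real (card (S i))" for i
  define c where "c = (\<Sum>i<n. \<bar>a i + d i\<bar>)"
  define L where "L = - (\<Sum>i<n. \<bar>a i\<bar>)"
  have c: "a i + d i \<le> c" and L: "L \<le> a i" if "i < n" for i
    using member_le_sum[of i "{..<n}" "\<lambda>i. \<bar>a i + d i\<bar>"]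
      member_le_sum[of i "{..<n}" "\<lambda>i. \<bar>a i\<bar>"] that
    by (auto simp: c_def L_def)
  have "(\<Sum>i<n. m i * chi i / p i) * T
          \<le> real K * T + ((\<Sum>i<n. m i * chi i / p i) * c + (\<Sum>i<n. m i * chi i) - real K * L)"
    if T: "T \<ge> max c L" for T
  proof -
    have "(T - c) * (\<Sum>i<n. m i * chi i / p i) - (\<Sum>i<n. m i * chi i)
            = (\<Sum>i<n. m i * chi i * ((T - c) / p i - 1))"
      by (simp add: sum_distrib_left sum_subtractf[symmetric] algebra_simps)
    also have "\<dots> \<le> (\<Sum>i<n. m i * real (nat \<lfloor>(T - c) / p i\<rfloor>) * chi i)"
    proof (rule sum_mono)
      fix i assume "i \<in> {..<n}"
      then have "(T - c) / p i - 1 \<le> real (nat \<lfloor>(T - c) / p i\<rfloor>)" and "0 \<le> m i * chi i"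
        using T p[of i] chi[of i] unfolding m_def by auto
      then show "m i * chi i * ((T - c) / p i - 1) \<le> m i * real (nat \<lfloor>(T - c) / p i\<rfloor>) * chi i"
        by (metis mult.commute mult.left_commute mult_left_mono)
    qed
    also have "\<dots> \<le> real K * (T - L)"
      unfolding m_def
      by (rule sum_slot_lengths_before_horizon_le[OF fin chi p window overlap c L])
         (use T in auto)
    finally show ?thesis by (simp add: algebra_simps)
  qed
  then have "(\<Sum>i<n. m i * chi i / p i) \<le> real K" by (rule le_of_affine_bound)
  then show ?thesis by (simp add: m_def)
qed

lemma walk_from_hd_last:
  "walk_from u es w \<Longrightarrow> es \<noteq> [] \<Longrightarrow> fst (hd es) = u \<and> snd (last es) = w"
  by (induction es arbitrary: u) (auto elim: walk_from.elims)

lemma card_senders_in_region_le_c1: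
  assumes "finite (fst ` E)" and "A \<in> M" and "A \<subseteq> E"
  shows "card {fst e | e. e \<in> A \<and> fst e \<in> region (interference_radius E M) v h} \<le> c1 E M"
  unfolding c1_def
proof (rule cSup_upper)
  show "bdd_above {card {fst e | e. e \<in> A \<and> fst e \<in> region (interference_radius E M) v h}
                     | A v h. A \<in> M \<and> A \<subseteq> E}"
    by (rule bdd_aboveI[where M="card (fst ` E)"]) (force intro!: card_mono[OF assms(1)])
qed (use assms in blast)

lemma region_load_eq_sum_card:
  assumes "finite V" and "\<And>i. i < n \<Longrightarrow> S i \<subseteq> V"
  shows "region_load V n S chi p g = (\<Sum>i<n. real (card (S i \<inter> g)) * chi i / p i)"
proof -
  have "region_load V n S chi p g = (\<Sum>u\<in>V \<inter> g. \<Sum>i<n. if u \<in> S i then chi i / p i else 0)"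
    unfolding region_load_def node_load_def
    by (rule sum.cong[OF refl]) (simp add: sum.If_cases Int_def conj_commute lessThan_def)
  also have "\<dots> = (\<Sum>i<n. \<Sum>u\<in>V \<inter> g. if u \<in> S i then chi i / p i else 0)"
    by (rule sum.swap)
  also have "\<dots> = (\<Sum>i<n. real (card (S i \<inter> g)) * chi i / p i)"
  proof (rule sum.cong[OF refl])
    fix i assume "i \<in> {..<n}"
    then have "V \<inter> g \<inter> {u. u \<in> S i} = S i \<inter> g" using assms(2) by auto
    then show "(\<Sum>u\<in>V \<inter> g. if u \<in> S i then chi i / p i else 0) = real (card (S i \<inter> g)) * chi i / p i"
      using assms(1) by (simp add: sum.If_cases)
  qed
  finally show ?thesis .
qed

lemma finite_fst_links: "finite V \<Longrightarrow> finite (fst ` links V R)"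
  by (rule finite_subset[rotated]) (auto simp: links_def)

lemma activeI:
  "i < n \<Longrightarrow> u \<in> S i \<Longrightarrow> j < length (\<sigma> i u t) \<Longrightarrow>
   snd (\<sigma> i u t ! j) \<le> \<tau> \<Longrightarrow> \<tau> < snd (\<sigma> i u t ! j) + chi i \<Longrightarrow> (i, u, t, j) \<in> active n S chi \<sigma> \<tau>"
  unfolding active_def by simp

context
  fixes V R vs M n S chi p a d \<sigma>
  assumes valid: "valid_schedule V R vs M n S chi p a d \<sigma>"
begin

lemma route_valid:
  assumes "i < n" "u \<in> S i"
  shows "set (map fst (\<sigma> i u t)) \<subseteq> links V R" "walk_from u (map fst (\<sigma> i u t)) vs"
    "\<And>j. j < length (\<sigma> i u t) \<Longrightarrow> a i + real t * p i \<le> snd (\<sigma> i u t ! j) \<and>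
            snd (\<sigma> i u t ! j) + chi i \<le> a i + real t * p i + d i"
  using valid assms unfolding valid_schedule_def Let_def by blast+

lemma route_nonempty: "i < n \<Longrightarrow> u \<in> S i \<Longrightarrow> vs \<notin> S i \<Longrightarrow> \<sigma> i u t \<noteq> []"
  using route_valid(2)[of i u t] by auto

lemma route_first_sender_last_receiver:
  assumes "i < n" "u \<in> S i" "\<sigma> i u t \<noteq> []"
  shows "fst (fst (hd (\<sigma> i u t))) = u" "snd (fst (last (\<sigma> i u t))) = vs"
  using walk_from_hd_last[OF route_valid(2)[OF assms(1,2)]] assms(3)
  by (simp_all add: hd_map last_map)

lemma active_links_in_model: "active_link \<sigma> ` active n S chi \<sigma> \<tau> \<in> M"
  using valid unfolding valid_schedule_def by blast

lemma active_links_subset: "active_link \<sigma> ` active n S chi \<sigma> \<tau> \<subseteq> links V R"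
proof
  fix e assume "e \<in> active_link \<sigma> ` active n S chi \<sigma> \<tau>"
  then obtain i u t j where "i < n" "u \<in> S i" "j < length (\<sigma> i u t)" "e = fst (\<sigma> i u t ! j)"
    unfolding active_def active_link_def by auto
  then show "e \<in> links V R" using route_valid(1)[of i u t] by auto
qed

lemma active_hops_eq_if_common_node:
  assumes "x \<in> active n S chi \<sigma> \<tau>" "y \<in> active n S chi \<sigma> \<tau>"
    and "w \<in> {fst (active_link \<sigma> x), snd (active_link \<sigma> x)}"
    and "w \<in> {fst (active_link \<sigma> y), snd (active_link \<sigma> y)}"
  shows "x = y"
  using valid assms unfolding valid_schedule_def by blast

lemma route_ends_in_window:
  assumes "i < n" "u \<in> S i" "\<sigma> i u t \<noteq> []"
  shows "a i + real t * p i \<le> snd (hd (\<sigma> i u t)) \<and>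
           snd (hd (\<sigma> i u t)) + chi i \<le> a i + real t * p i + d i"
    and "a i + real t * p i \<le> snd (last (\<sigma> i u t)) \<and>
           snd (last (\<sigma> i u t)) + chi i \<le> a i + real t * p i + d i"
  using route_valid(3)[OF assms(1,2), where t=t and j=0]
    route_valid(3)[OF assms(1,2), where t=t and j="length (\<sigma> i u t) - 1"] assms(3)
  by (simp_all add: hd_conv_nth last_conv_nth)

lemma first_hop_active:
  assumes "i < n" "u \<in> S i" "vs \<notin> S i"
    and "snd (hd (\<sigma> i u t)) \<le> \<tau>" "\<tau> < snd (hd (\<sigma> i u t)) + chi i"
  shows "(i, u, t, 0) \<in> active n S chi \<sigma> \<tau>" "fst (active_link \<sigma> (i, u, t, 0)) = u"
proof -
  have "\<sigma> i u t \<noteq> []" using route_nonempty[OF assms(1-3)] .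
  then show "(i, u, t, 0) \<in> active n S chi \<sigma> \<tau>"
    using assms by (auto intro: activeI simp: hd_conv_nth)
  show "fst (active_link \<sigma> (i, u, t, 0)) = u"
    using route_first_sender_last_receiver(1)[OF assms(1,2) \<open>\<sigma> i u t \<noteq> []\<close>] \<open>\<sigma> i u t \<noteq> []\<close>
    by (simp add: active_link_def hd_conv_nth)
qed

lemma last_hop_active:
  assumes "i < n" "u \<in> S i" "vs \<notin> S i"
    and "snd (last (\<sigma> i u t)) \<le> \<tau>" "\<tau> < snd (last (\<sigma> i u t)) + chi i"
  shows "(i, u, t, length (\<sigma> i u t) - 1) \<in> active n S chi \<sigma> \<tau>"
    "snd (active_link \<sigma> (i, u, t, length (\<sigma> i u t) - 1)) = vs"
proof -
  have "\<sigma> i u t \<noteq> []" using route_nonempty[OF assms(1-3)] .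
  then show "(i, u, t, length (\<sigma> i u t) - 1) \<in> active n S chi \<sigma> \<tau>"
    using assms by (auto intro: activeI simp: last_conv_nth)
  show "snd (active_link \<sigma> (i, u, t, length (\<sigma> i u t) - 1)) = vs"
    using route_first_sender_last_receiver(2)[OF assms(1,2) \<open>\<sigma> i u t \<noteq> []\<close>] \<open>\<sigma> i u t \<noteq> []\<close>
    by (simp add: active_link_def last_conv_nth)
qed

text \<open>First hops active at the same instant have distinct senders, so those of sources in
  one region are counted by c1.\<close>

lemma card_active_first_hops_le_c1:
  assumes "finite V" and sink: "\<And>i. i < n \<Longrightarrow> vs \<notin> S i"
    and J: "J \<subseteq> {(i, u, t). i < n \<and> u \<in> S i \<inter> region (interference_radius (links V R) M) v h \<and>
                 snd (hd (\<sigma> i u t)) \<le> \<tau> \<and> \<tau> < snd (hd (\<sigma> i u t)) + chi i}"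
    (is "J \<subseteq> {(i, u, t). _ \<and> u \<in> S i \<inter> ?g \<and> _}")
  shows "card J \<le> c1 (links V R) M"
proof -
  let ?senders = "{fst e | e. e \<in> active_link \<sigma> ` active n S chi \<sigma> \<tau> \<and> fst e \<in> ?g}"
  have hop: "(i, u, t, 0) \<in> active n S chi \<sigma> \<tau>" "fst (active_link \<sigma> (i, u, t, 0)) = u"
    and in_region: "u \<in> ?g" if "(i, u, t) \<in> J" for i u t
  proof -
    from that J have "i < n" "u \<in> S i" "u \<in> ?g"
      and "snd (hd (\<sigma> i u t)) \<le> \<tau>" "\<tau> < snd (hd (\<sigma> i u t)) + chi i" by auto
    then show "(i, u, t, 0) \<in> active n S chi \<sigma> \<tau>" "fst (active_link \<sigma> (i, u, t, 0)) = u" "u \<in> ?g"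
      using first_hop_active sink by auto
  qed
  have "inj_on (\<lambda>(i, u, t). u) J"
  proof (rule inj_onI)
    fix x y assume "x \<in> J" "y \<in> J" and same_source: "(\<lambda>(i, u, t). u) x = (\<lambda>(i, u, t). u) y"
    obtain i u t where x: "x = (i, u, t)" by (cases x) blast
    obtain i' u' t' where y: "y = (i', u', t')" by (cases y) blast
    have "(i, u, t, 0::nat) = (i', u', t', 0)"
      using hop[of i u t] hop[of i' u' t'] \<open>x \<in> J\<close> \<open>y \<in> J\<close> same_source x y
      by (intro active_hops_eq_if_common_node[where w=u and \<tau>=\<tau>]) simp_all
    then show "x = y" using x y by simp
  qed
  then have "card J = card ((\<lambda>(i, u, t). u) ` J)" by (rule card_image[symmetric])
  also have "\<dots> \<le> card ?senders"
  proof (rule card_mono)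
    have "?senders \<subseteq> fst ` links V R"
      using active_links_subset by blast
    then show "finite ?senders"
      using finite_fst_links[OF \<open>finite V\<close>] by (rule finite_subset)
    show "(\<lambda>(i, u, t). u) ` J \<subseteq> ?senders"
    proof
      fix w assume "w \<in> (\<lambda>(i, u, t). u) ` J"
      then obtain i t where "(i, w, t) \<in> J" by auto
      then have "active_link \<sigma> (i, w, t, 0) \<in> active_link \<sigma> ` active n S chi \<sigma> \<tau>"
        and "fst (active_link \<sigma> (i, w, t, 0)) = w" and "w \<in> ?g"
        using hop[of i w t] in_region[of i w t] by auto
      then show "w \<in> ?senders"
        unfolding mem_Collect_eq by (intro exI[where x="active_link \<sigma> (i, w, t, 0)"]) simp
    qed
  qed
  also have "\<dots> \<le> c1 (links V R) M"
    by (rule card_senders_in_region_le_c1[OF finite_fst_links[OF \<open>finite V\<close>]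
          active_links_in_model active_links_subset])
  finally show ?thesis .
qed

text \<open>All last hops end at the sink, so at most one of them is active at any instant.\<close>

lemma card_active_last_hops_le_1:
  assumes sink: "\<And>i. i < n \<Longrightarrow> vs \<notin> S i"
    and "finite J"
    and J: "J \<subseteq> {(i, u, t). i < n \<and> u \<in> S i \<and>
                 snd (last (\<sigma> i u t)) \<le> \<tau> \<and> \<tau> < snd (last (\<sigma> i u t)) + chi i}"
  shows "card J \<le> 1"
proof -
  let ?hop = "\<lambda>i u t. (i, u, t, length (\<sigma> i u t) - 1)"
  have hop: "?hop i u t \<in> active n S chi \<sigma> \<tau>" "snd (active_link \<sigma> (?hop i u t)) = vs"
    if "(i, u, t) \<in> J" for i u t
  proof -
    from that J have "i < n" "u \<in> S i"
      and "snd (last (\<sigma> i u t)) \<le> \<tau>" "\<tau> < snd (last (\<sigma> i u t)) + chi i" by auto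
    then show "?hop i u t \<in> active n S chi \<sigma> \<tau>" "snd (active_link \<sigma> (?hop i u t)) = vs"
      using last_hop_active sink by auto
  qed
  have "x = y" if "x \<in> J" "y \<in> J" for x y
  proof -
    obtain i u t where x: "x = (i, u, t)" by (cases x) blast
    obtain i' u' t' where y: "y = (i', u', t')" by (cases y) blast
    have "?hop i u t = ?hop i' u' t'"
      using hop[of i u t] hop[of i' u' t'] that x y
      by (intro active_hops_eq_if_common_node[where w=vs and \<tau>=\<tau>]) auto
    then show "x = y" using x y by simp
  qed
  then show ?thesis using \<open>finite J\<close> by (simp add: card_le_Suc0_iff_eq)
qed

lemma region_utilization_le_c1:
  assumes "finite V" and "\<And>i. i < n \<Longrightarrow> finite (S i)"
    and sink: "\<And>i. i < n \<Longrightarrow> vs \<notin> S i"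
    and "\<And>i. i < n \<Longrightarrow> chi i \<ge> 0" and "\<And>i. i < n \<Longrightarrow> p i > 0"
    and g: "g = region (interference_radius (links V R) M) v h"
  shows "(\<Sum>i<n. real (card (S i \<inter> g)) * chi i / p i) \<le> real (c1 (links V R) M)"
proof (rule utilization_le_slot_overlap[where a=a and d=d and st="\<lambda>i u t. snd (hd (\<sigma> i u t))"])
  show "a i + real t * p i \<le> snd (hd (\<sigma> i u t)) \<and>
        snd (hd (\<sigma> i u t)) + chi i \<le> a i + real t * p i + d i"
    if "i < n" "u \<in> S i \<inter> g" for i u t
    using route_ends_in_window(1) route_nonempty sink that by blast
  show "card J \<le> c1 (links V R) M"
    if "J \<subseteq> {(i, u, t). i < n \<and> u \<in> S i \<inter> g \<and>
                snd (hd (\<sigma> i u t)) \<le> \<tau> \<and> \<tau> < snd (hd (\<sigma> i u t)) + chi i}" for \<tau> J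
    using card_active_first_hops_le_c1[OF \<open>finite V\<close> sink] that g by blast
qed (use assms in auto)

lemma utilization_le_1:
  assumes "\<And>i. i < n \<Longrightarrow> finite (S i)"
    and sink: "\<And>i. i < n \<Longrightarrow> vs \<notin> S i"
    and "\<And>i. i < n \<Longrightarrow> chi i \<ge> 0" and "\<And>i. i < n \<Longrightarrow> p i > 0"
  shows "(\<Sum>i<n. real (card (S i)) * chi i / p i) \<le> 1"
proof -
  have "(\<Sum>i<n. real (card (S i)) * chi i / p i) \<le> real (1::nat)"
  proof (rule utilization_le_slot_overlap[where a=a and d=d and st="\<lambda>i u t. snd (last (\<sigma> i u t))"])
    show "a i + real t * p i \<le> snd (last (\<sigma> i u t)) \<and>
          snd (last (\<sigma> i u t)) + chi i \<le> a i + real t * p i + d i"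
      if "i < n" "u \<in> S i" for i u t
      using route_ends_in_window(2) route_nonempty sink that by blast
    show "card J \<le> 1"
      if "finite J" "J \<subseteq> {(i, u, t). i < n \<and> u \<in> S i \<and>
                  snd (last (\<sigma> i u t)) \<le> \<tau> \<and> \<tau> < snd (last (\<sigma> i u t)) + chi i}" for \<tau> J
      using card_active_last_hops_le_1[OF sink that] .
  qed (use assms in auto)
  then show ?thesis by simp
qed

end

theorem theorem1:
  fixes V :: "point set" and R :: real and vs :: point and M :: "link set set"
    and n :: nat and S :: "nat \<Rightarrow> point set" and chi p a d :: "nat \<Rightarrow> real"
  assumes "finite V" and "vs \<in> V" and "R > 0"
    and "\<And>i. i < n \<Longrightarrow> S i \<subseteq> V"
    and "\<And>i. i < n \<Longrightarrow> vs \<notin> S i"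
    and "\<And>i. i < n \<Longrightarrow> chi i > 0"
    and "\<And>i. i < n \<Longrightarrow> p i > 0"
    and "schedulable V R vs M n S chi p a d"
  shows "(\<forall>v h. region_load V n S chi p (region (interference_radius (links V R) M) v h)
                  \<le> real (c1 (links V R) M))
         \<and> (\<Sum>i<n. real (card (S i)) * chi i / p i) \<le> 1"
proof -
  obtain \<sigma> where valid: "valid_schedule V R vs M n S chi p a d \<sigma>"
    using assms(8) unfolding schedulable_def by blast
  have fin: "finite (S i)" and "chi i \<ge> 0" if "i < n" for i
    using finite_subset[OF assms(4) assms(1)] assms(6) that by (auto simp: less_imp_le)
  then show ?thesis
    using region_utilization_le_c1[OF valid assms(1) fin assms(5) _ assms(7)]
      utilization_le_1[OF valid fin assms(5) _ assms(7)]
      region_load_eq_sum_card[OF assms(1,4)]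
    by simp
qed

end
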